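(* Under the assumptions below, $p_\epsilon(v^\epsilon-g^\epsilon)$ is bounded on $E_T$ uniformly in $\epsilon\in(0,1)$, where $v^\epsilon$ is the bounded classical solution in $H^{2+\frac{\beta-\alpha}{2},1+\frac{\beta-\alpha}{4}}(E_T)$ ($\beta\in(\alpha,2)$) of $$(\partial_t-\mathcal{L}_D-I+r)v^\epsilon+p_\epsilon(v^\epsilon-g^\epsilon)=0\ \text{ on }\mathbb{R}\times(0,T],\qquad v^\epsilon(x,0)=g^\epsilon(x).$$ Assumptions: $T>0$, $E_T=\mathbb{R}\times[0,T]$; $a,b,r\in H^{\ell,\ell/2}(E_T)$ for some $\ell>1$, $r\ge0$, $a\ge\lambda>0$ on $E_T$; $\nu$ is a Lévy measure with $\int_{|y|>1}|y|\,\nu(dy)<\infty$ and a density $\rho$ with $\rho(y)\le M/|y|^{1+\alpha}$ for $|y|\le1$, $M>0$, $1\le\alpha<2$; $g$ satisfies $0\le g\le K$, is $L$-Lipschitz, and $\partial^2_{xx}g\ge-J_0$ distributionally.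
   Context: $\mathcal{L}_Dv=a\,\partial^2_{xx}v+b\,\partial_xv$, $Iv(x,t)=\int_{\mathbb{R}}[v(x+y,t)-v(x,t)-y\,\partial_xv(x,t)\mathbf{1}_{\{|y|\le1\}}]\nu(dy)$. $(g^\epsilon)$ are smooth mollifications of $g$ with $\partial^2_{xx}g^\epsilon\ge-J_0$, $0\le g^\epsilon\le K$, $|(g^\epsilon)'|\le L$. Each $p_\epsilon\in C^\infty(\mathbb{R})$ satisfies: $p_\epsilon\le0$; $p_\epsilon(y)=0$ for $y\ge\epsilon$; $p_\epsilon(0)=-a^{(0)}J_0-|b|^{(0)}L-r^{(0)}K-J_0\int_{|y|\le1}|y|^2\nu(dy)-K\int_{|y|>1}\nu(dy)$ with $a^{(0)}=\max_{E_T}a$, $|b|^{(0)}=\max_{E_T}|b|$, $r^{(0)}=\max_{E_T}r$; $p_\epsilon'\ge0$; $p_\epsilon''\le0$; $p_\epsilon(y)\to0$ for $y>0$ and $\to-\infty$ for $y<0$ as $\epsilon\downarrow0$. $H^{\gamma,\gamma/2}(E_T)$ denotes the parabolic Hölder space of order $\gamma$ (non-integer) on $E_T$. *)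

theory Defs
  imports "HOL-Analysis.Analysis"
begin

definition ET :: "real \<Rightarrow> (real \<times> real) set" where
  "ET T = UNIV \<times> {0..T}"

definition pdx :: "(real \<Rightarrow> real \<Rightarrow> real) \<Rightarrow> real \<Rightarrow> real \<Rightarrow> real" where
  "pdx u = (\<lambda>x t. deriv (\<lambda>z. u z t) x)"

definition pdt :: "real \<Rightarrow> (real \<Rightarrow> real \<Rightarrow> real) \<Rightarrow> real \<Rightarrow> real \<Rightarrow> real" where
  "pdt T u = (\<lambda>x t. vector_derivative (\<lambda>s. u x s) (at t within {0..T}))"

definition Dtx :: "real \<Rightarrow> nat \<Rightarrow> nat \<Rightarrow> (real \<Rightarrow> real \<Rightarrow> real) \<Rightarrow> real \<Rightarrow> real \<Rightarrow> real" where
  "Dtx T r s u = (pdt T ^^ r) ((pdx ^^ s) u)"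

definition holder_x :: "real \<Rightarrow> real \<Rightarrow> (real \<Rightarrow> real \<Rightarrow> real) \<Rightarrow> bool" where
  "holder_x T \<theta> f \<longleftrightarrow>
     (\<exists>C. \<forall>x y t. t \<in> {0..T} \<longrightarrow> \<bar>f x t - f y t\<bar> \<le> C * \<bar>x - y\<bar> powr \<theta>)"

definition holder_t :: "real \<Rightarrow> real \<Rightarrow> (real \<Rightarrow> real \<Rightarrow> real) \<Rightarrow> bool" where
  "holder_t T \<theta> f \<longleftrightarrow>
     (\<exists>C. \<forall>x t s. t \<in> {0..T} \<longrightarrow> s \<in> {0..T} \<longrightarrow> \<bar>f x t - f x s\<bar> \<le> C * \<bar>t - s\<bar> powr \<theta>)"

text \<open>Parabolic Hoelder space H^{gamma,gamma/2}(E_T), gamma > 0 non-integer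
  (Ladyzhenskaya--Solonnikov--Ural'tseva): all D_t^r D_x^s u with 2r+s <= [gamma]
  exist, are continuous and bounded on E_T; those with 2r+s = [gamma] are
  (gamma-[gamma])-Hoelder in x; and D_t^r D_x^s u is ((gamma-2r-s)/2)-Hoelder in t
  whenever 0 < gamma-2r-s < 2.\<close>
definition parabolic_holder :: "real \<Rightarrow> real \<Rightarrow> (real \<Rightarrow> real \<Rightarrow> real) \<Rightarrow> bool" where
  "parabolic_holder \<gamma> T u \<longleftrightarrow> 0 < \<gamma> \<and> \<gamma> \<notin> \<int> \<and>
    (\<forall>r s. 2 * r + s \<le> nat \<lfloor>\<gamma>\<rfloor> \<longrightarrow>
        continuous_on (ET T) (\<lambda>(x, t). Dtx T r s u x t)
      \<and> bounded ((\<lambda>(x, t). Dtx T r s u x t) ` ET T)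
      \<and> (2 * (r + 1) + s \<le> nat \<lfloor>\<gamma>\<rfloor> \<longrightarrow>
           (\<forall>x t. t \<in> {0..T} \<longrightarrow> (\<lambda>\<tau>. Dtx T r s u x \<tau>) differentiable (at t within {0..T})))
      \<and> (r = 0 \<and> s + 1 \<le> nat \<lfloor>\<gamma>\<rfloor> \<longrightarrow>
           (\<forall>x t. t \<in> {0..T} \<longrightarrow> (\<lambda>z. Dtx T 0 s u z t) differentiable (at x)))
      \<and> (2 * r + s = nat \<lfloor>\<gamma>\<rfloor> \<longrightarrow> holder_x T (\<gamma> - of_int \<lfloor>\<gamma>\<rfloor>) (Dtx T r s u)))
    \<and> (\<forall>r s. 0 < \<gamma> - real (2 * r + s) \<and> \<gamma> - real (2 * r + s) < 2 \<longrightarrow>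
        holder_t T ((\<gamma> - real (2 * r + s)) / 2) (Dtx T r s u))"

definition smooth_fun :: "(real \<Rightarrow> real) \<Rightarrow> bool" where
  "smooth_fun f \<longleftrightarrow> (\<forall>n x. ((deriv ^^ n) f) differentiable (at x))"

text \<open>Distributional inequality g'' >= c: tested against nonnegative smooth compactly supported functions.\<close>
definition dist_d2_ge :: "(real \<Rightarrow> real) \<Rightarrow> real \<Rightarrow> bool" where
  "dist_d2_ge g c \<longleftrightarrow>
     (\<forall>\<phi>. smooth_fun \<phi> \<and> (\<forall>x. 0 \<le> \<phi> x) \<and> bounded {x. \<phi> x \<noteq> 0} \<longrightarrow>
        c * (\<integral>x. \<phi> x \<partial>lborel) \<le> (\<integral>x. g x * deriv (deriv \<phi>) x \<partial>lborel))"

definition levy_measure :: "real measure \<Rightarrow> bool" where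
  "levy_measure \<nu> \<longleftrightarrow> sets \<nu> = sets borel \<and> emeasure \<nu> {0} = 0 \<and>
     (\<integral>\<^sup>+ y. ennreal (min 1 (y\<^sup>2)) \<partial>\<nu>) < \<infinity>"

definition levy_I :: "real measure \<Rightarrow> (real \<Rightarrow> real \<Rightarrow> real) \<Rightarrow> real \<Rightarrow> real \<Rightarrow> real" where
  "levy_I \<nu> v x t =
     (\<integral>y. v (x + y) t - v x t - y * pdx v x t * indicator {y. \<bar>y\<bar> \<le> 1} y \<partial>\<nu>)"

definition LD :: "(real \<Rightarrow> real \<Rightarrow> real) \<Rightarrow> (real \<Rightarrow> real \<Rightarrow> real) \<Rightarrow> (real \<Rightarrow> real \<Rightarrow> real) \<Rightarrow> real \<Rightarrow> real \<Rightarrow> real" where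
  "LD a b v x t = a x t * pdx (pdx v) x t + b x t * pdx v x t"

text \<open>sup over E_T (the paper's max_{E_T}).\<close>
definition supET :: "real \<Rightarrow> (real \<Rightarrow> real \<Rightarrow> real) \<Rightarrow> real" where
  "supET T f = (SUP z\<in>ET T. f (fst z) (snd z))"

end

theory Submission
  imports Defs
begin

text \<open>Since \<open>p\<^sub>\<epsilon>\<close> is nonpositive and nondecreasing, it suffices to show \<open>v\<^sup>\<epsilon> \<ge> g\<^sup>\<epsilon>\<close>: then
  \<open>p\<^sub>\<epsilon>(0) \<le> p\<^sub>\<epsilon>(v\<^sup>\<epsilon> - g\<^sup>\<epsilon>) \<le> 0\<close>, and \<open>p\<^sub>\<epsilon>(0)\<close> is the same constant for every \<open>\<epsilon>\<close>.
  The comparison is a minimum principle. If \<open>v - g\<close> were negative somewhere, then for small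
  \<open>\<delta> > 0\<close> so is \<open>u = v - g + \<delta> (ln cosh x + \<Lambda> t)\<close>; being coercive in \<open>x\<close>, \<open>u\<close> attains a
  negative minimum at some \<open>(x\<^sub>0, t\<^sub>0)\<close> with \<open>t\<^sub>0 > 0\<close>. There the optimality conditions together
  with \<open>g'' \<ge> -J\<^sub>0\<close> bound \<open>-a v\<^sub>x\<^sub>x\<close>, \<open>-b v\<^sub>x\<close>, \<open>-I v\<close> and \<open>r v\<close> from above by the terms of
  \<open>-p\<^sub>\<epsilon>(0)\<close> plus \<open>O(\<delta>)\<close>, since \<open>ln cosh\<close> has first and second derivative bounded by 1.
  As \<open>p\<^sub>\<epsilon>(v - g) \<le> p\<^sub>\<epsilon>(0)\<close>, the equation leaves \<open>v\<^sub>t \<ge> -\<delta> (\<Lambda> - 1)\<close>, contradicting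
  \<open>v\<^sub>t \<le> -\<delta> \<Lambda>\<close> at a minimum in time.\<close>

lemma taylor_lower_bound_of_second_deriv:
  fixes f f' f'' :: "real \<Rightarrow> real"
  assumes f': "\<And>z. (f has_real_derivative f' z) (at z)"
    and f'': "\<And>z. (f' has_real_derivative f'' z) (at z)"
    and lower: "\<And>z. m \<le> f'' z"
  shows "m / 2 * y\<^sup>2 \<le> f (x + y) - f x - y * f' x"
proof -
  define h where "h z = f z - m / 2 * z\<^sup>2" for z
  have h': "(h has_real_derivative f' z - m * z) (at z)" for z
    unfolding h_def by (auto intro!: derivative_eq_intros f')
  have "convex_on UNIV h"
  proof (rule f''_ge0_imp_convex)
    show "((\<lambda>z. f' z - m * z) has_real_derivative f'' z - m) (at z)" for z
      by (auto intro!: derivative_eq_intros f'')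
  qed (use h' lower in auto)
  then have "(f' x - m * x) * (x + y - x) \<le> h (x + y) - h x"
    by (rule convex_on_imp_above_tangent) (auto intro: has_field_derivative_at_within h')
  then show ?thesis
    by (simp add: h_def power2_eq_square algebra_simps)
qed

definition ln_cosh :: "real \<Rightarrow> real" where
  "ln_cosh x = ln (cosh x)"

lemma has_real_derivative_ln_cosh: "(ln_cosh has_real_derivative tanh x) (at x)"
  unfolding ln_cosh_def by (auto intro!: derivative_eq_intros simp: tanh_def)

lemma has_real_derivative_tanh: "(tanh has_real_derivative 1 - tanh x ^ 2) (at x)"
  using has_field_derivative_tanh[of "\<lambda>x. x" x 1 UNIV] by (simp add: DERIV_ident)

lemma abs_tanh_le_1: "\<bar>tanh x\<bar> \<le> (1::real)"
  using tanh_real_bounds[of x] by auto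

lemma ln_cosh_nonneg: "0 \<le> ln_cosh x"
  unfolding ln_cosh_def using cosh_real_ge_1[of x] by simp

lemma abs_le_ln_cosh: "\<bar>x\<bar> - 1 \<le> ln_cosh x"
proof -
  have "exp \<bar>x\<bar> / 2 \<le> cosh x"
    by (cases "x \<ge> 0") (auto simp: cosh_field_def)
  then have "\<bar>x\<bar> - ln 2 \<le> ln_cosh x"
    unfolding ln_cosh_def by (subst (asm) ln_le_cancel_iff [symmetric]) (auto simp: ln_div)
  then show ?thesis using ln_2_less_1 by linarith
qed

lemma ln_cosh_lipschitz: "\<bar>ln_cosh x - ln_cosh y\<bar> \<le> \<bar>x - y\<bar>"
  using field_differentiable_bound[of UNIV ln_cosh tanh 1 x y]
  by (auto intro: has_field_derivative_at_within has_real_derivative_ln_cosh abs_tanh_le_1)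

lemma ln_cosh_taylor_upper: "ln_cosh (x + y) - ln_cosh x - y * tanh x \<le> y\<^sup>2 / 2"
proof -
  have "- 1 / 2 * y\<^sup>2 \<le> - ln_cosh (x + y) - - ln_cosh x - y * - tanh x"
    by (rule taylor_lower_bound_of_second_deriv[where f'' = "\<lambda>z. tanh z ^ 2 - 1"])
      (auto intro!: derivative_eq_intros has_real_derivative_ln_cosh has_real_derivative_tanh)
  then show ?thesis by simp
qed

lemma second_deriv_lower_bound_nonpos_if_bounded:
  fixes f f' f'' :: "real \<Rightarrow> real"
  assumes f': "\<And>z. (f has_real_derivative f' z) (at z)"
    and f'': "\<And>z. (f' has_real_derivative f'' z) (at z)"
    and lower: "\<And>z. m \<le> f'' z" and bounds: "\<And>z. 0 \<le> f z \<and> f z \<le> K"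
  shows "m \<le> 0"
proof (rule ccontr)
  assume "\<not> m \<le> 0"
  define y where "y = sqrt ((2 * K + 1) / m)"
  have "m * y\<^sup>2 = 2 * K + 1"
    using \<open>\<not> m \<le> 0\<close> bounds[of 0] by (simp add: y_def)
  moreover have "m / 2 * y\<^sup>2 \<le> f (0 + y) - f 0 - y * f' 0"
    and "m / 2 * (- y)\<^sup>2 \<le> f (0 + - y) - f 0 - (- y) * f' 0"
    by (rule taylor_lower_bound_of_second_deriv[OF f' f'' lower])+
  ultimately show False
    using bounds[of y] bounds[of "- y"] bounds[of 0] by simp
qed

lemma deriv_conditions_at_global_min:
  fixes f f' :: "real \<Rightarrow> real"
  assumes f': "\<And>z. (f has_real_derivative f' z) (at z)"
    and f'': "(f' has_real_derivative f2) (at x0)"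
    and min: "\<And>z. f x0 \<le> f z"
  shows "f' x0 = 0" and "0 \<le> f2"
proof -
  show crit: "f' x0 = 0"
    using DERIV_local_min[OF f'[of x0], of 1] min by auto
  show "0 \<le> f2"
  proof (rule ccontr)
    assume "\<not> 0 \<le> f2"
    then obtain d where "d > 0" and decr: "\<And>h. 0 < h \<Longrightarrow> h < d \<Longrightarrow> f' (x0 + h) < f' x0"
      using DERIV_neg_dec_right[OF f''] by force
    obtain \<xi> where \<xi>: "x0 < \<xi>" "\<xi> < x0 + d / 2" "f (x0 + d / 2) - f x0 = (x0 + d / 2 - x0) * f' \<xi>"
      using MVT2[of x0 "x0 + d / 2" f f'] \<open>d > 0\<close> f' by auto
    have "f' \<xi> < 0"
      using decr[of "\<xi> - x0"] \<xi> crit by auto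
    then have "(x0 + d / 2 - x0) * f' \<xi> < 0"
      using \<open>d > 0\<close> by (simp add: mult_pos_neg)
    then have "f (x0 + d / 2) < f x0"
      using \<xi>(3) by linarith
    then show False using min[of "x0 + d / 2"] by simp
  qed
qed

lemma deriv_nonpos_at_min_within_interval:
  fixes f :: "real \<Rightarrow> real"
  assumes f': "(f has_real_derivative D) (at t0 within {a..b})"
    and t0: "a < t0" "t0 \<le> b" and min: "\<And>s. s \<in> {a..b} \<Longrightarrow> f t0 \<le> f s"
  shows "D \<le> 0"
proof (rule ccontr)
  assume "\<not> D \<le> 0"
  then obtain e where "e > 0"
    and incr: "\<And>h. 0 < h \<Longrightarrow> t0 - h \<in> {a..b} \<Longrightarrow> h < e \<Longrightarrow> f (t0 - h) < f t0"
    using has_real_derivative_pos_inc_left[OF f'] by force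
  define h where "h = min (e / 2) (t0 - a)"
  have "0 < h" "h < e" "t0 - h \<in> {a..b}"
    using \<open>e > 0\<close> t0 by (auto simp: h_def)
  then show False using incr min[of "t0 - h"] by fastforce
qed

lemma continuous_coercive_attains_min_on_strip:
  fixes u :: "real \<Rightarrow> real \<Rightarrow> real"
  assumes cont: "continuous_on (ET T) (\<lambda>(x, t). u x t)"
    and c: "0 < c" and coercive: "\<And>x t. t \<in> {0..T} \<Longrightarrow> c * \<bar>x\<bar> - B \<le> u x t"
    and s: "s \<in> {0..T}"
  obtains x0 t0 where "t0 \<in> {0..T}" "\<And>x t. t \<in> {0..T} \<Longrightarrow> u x0 t0 \<le> u x t"
proof -
  define R where "R = \<bar>u 0 s + B\<bar> / c + 1"
  define S where "S = {-R..R} \<times> {0..T}"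
  have "S \<subseteq> ET T" by (auto simp: S_def ET_def)
  then have "continuous_on S (\<lambda>z. u (fst z) (snd z))"
    using continuous_on_subset[OF cont] by (simp add: case_prod_beta)
  moreover have "compact S" unfolding S_def by (intro compact_Times compact_Icc)
  moreover have "(0, s) \<in> S"
    using s c by (auto simp: S_def R_def intro: order_trans[of _ 0])
  ultimately obtain z0 where "z0 \<in> S" and z0: "\<And>z. z \<in> S \<Longrightarrow> u (fst z0) (snd z0) \<le> u (fst z) (snd z)"
    using continuous_attains_inf[of S "\<lambda>z. u (fst z) (snd z)"] by blast
  show thesis
  proof (rule that)
    show "snd z0 \<in> {0..T}" using \<open>z0 \<in> S\<close> by (auto simp: S_def)
    fix x t assume t: "t \<in> {0..T}"
    show "u (fst z0) (snd z0) \<le> u x t"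
    proof (cases "\<bar>x\<bar> \<le> R")
      case True
      then show ?thesis using z0[of "(x, t)"] t by (auto simp: S_def abs_le_iff)
    next
      case False
      have "c * R = \<bar>u 0 s + B\<bar> + c"
        using c by (simp add: R_def field_simps)
      then have "u 0 s + B < c * R"
        using c by linarith
      also have "\<dots> \<le> c * \<bar>x\<bar>" using False c by simp
      finally have "u 0 s < u x t" using coercive[OF t, of x] by linarith
      moreover have "u (fst z0) (snd z0) \<le> u 0 s"
        using z0[of "(0, s)"] \<open>(0, s) \<in> S\<close> by simp
      ultimately show ?thesis by simp
    qed
  qed
qed

lemma neg_integral_le_integral:
  fixes f H :: "'a \<Rightarrow> real"
  assumes "integrable M H" and "\<And>y. 0 \<le> H y" and "\<And>y. - H y \<le> f y"
  shows "- (\<integral>y. H y \<partial>M) \<le> (\<integral>y. f y \<partial>M)"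
proof (cases "integrable M f")
  case True
  then have "(\<integral>y. - H y \<partial>M) \<le> (\<integral>y. f y \<partial>M)"
    using assms by (intro integral_mono) auto
  then show ?thesis by simp
next
  case False
  then show ?thesis using assms by (simp add: not_integrable_integral_eq integral_nonneg_AE)
qed

lemma levy_measure_borel_measurable:
  assumes "levy_measure \<nu>"
  shows "borel_measurable \<nu> = borel_measurable borel"
  using assms by (intro measurable_cong_sets) (auto simp: levy_measure_def)

lemma levy_measure_integrable_small_jumps:
  assumes "levy_measure \<nu>"
  shows "integrable \<nu> (\<lambda>y. indicator {y. \<bar>y\<bar> \<le> 1} y * y\<^sup>2)"
proof (rule integrableI_bounded)
  show "(\<lambda>y. indicator {y. \<bar>y\<bar> \<le> 1} y * y\<^sup>2) \<in> borel_measurable \<nu>"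
    unfolding levy_measure_borel_measurable[OF assms] by measurable
  have "(\<integral>\<^sup>+ y. ennreal (norm (indicator {y. \<bar>y\<bar> \<le> 1} y * y\<^sup>2)) \<partial>\<nu>) \<le> (\<integral>\<^sup>+ y. ennreal (min 1 (y\<^sup>2)) \<partial>\<nu>)"
    by (intro nn_integral_mono) (auto simp: indicator_def abs_square_le_1)
  also have "\<dots> < \<infinity>" using assms by (simp add: levy_measure_def)
  finally show "(\<integral>\<^sup>+ y. ennreal (norm (indicator {y. \<bar>y\<bar> \<le> 1} y * y\<^sup>2)) \<partial>\<nu>) < \<infinity>" .
qed

lemma levy_measure_integrable_large_jumps:
  assumes "levy_measure \<nu>"
  shows "integrable \<nu> (\<lambda>y. indicator {y::real. 1 < \<bar>y\<bar>} y :: real)"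
proof (rule integrableI_bounded)
  show "(\<lambda>y. indicator {y::real. 1 < \<bar>y\<bar>} y :: real) \<in> borel_measurable \<nu>"
    unfolding levy_measure_borel_measurable[OF assms] by measurable
  have "(\<integral>\<^sup>+ y. ennreal (norm (indicator {y::real. 1 < \<bar>y\<bar>} y :: real)) \<partial>\<nu>) \<le> (\<integral>\<^sup>+ y. ennreal (min 1 (y\<^sup>2)) \<partial>\<nu>)"
    by (intro nn_integral_mono) (auto simp: indicator_def, metis abs_square_less_1 not_less less_imp_le)
  also have "\<dots> < \<infinity>" using assms by (simp add: levy_measure_def)
  finally show "(\<integral>\<^sup>+ y. ennreal (norm (indicator {y::real. 1 < \<bar>y\<bar>} y :: real)) \<partial>\<nu>) < \<infinity>" .
qed

lemma levy_measure_integral_large_jumps: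
  assumes "levy_measure \<nu>"
  shows "(\<integral>y. indicator {y::real. 1 < \<bar>y\<bar>} y \<partial>\<nu>) = measure \<nu> {y. 1 < \<bar>y\<bar>}"
  using assms sets_eq_imp_space_eq[of \<nu> borel] by (simp add: levy_measure_def)

lemma levy_measure_integrable_first_moment:
  assumes "levy_measure \<nu>" and "(\<integral>\<^sup>+ y. ennreal (\<bar>y\<bar> * indicator {y. 1 < \<bar>y\<bar>} y) \<partial>\<nu>) < \<infinity>"
  shows "integrable \<nu> (\<lambda>y. \<bar>y\<bar> * indicator {y::real. 1 < \<bar>y\<bar>} y)"
proof (rule integrableI_bounded)
  show "(\<lambda>y. \<bar>y\<bar> * indicator {y::real. 1 < \<bar>y\<bar>} y) \<in> borel_measurable \<nu>"
    unfolding levy_measure_borel_measurable[OF assms(1)] by measurable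
  show "(\<integral>\<^sup>+ y. ennreal (norm (\<bar>y\<bar> * indicator {y::real. 1 < \<bar>y\<bar>} y)) \<partial>\<nu>) < \<infinity>"
    using assms(2) by (simp add: abs_mult)
qed

lemma Dtx_0_0 [simp]: "Dtx T 0 0 u = u"
  by (simp add: Dtx_def)

lemma parabolic_holder_continuous_bounded:
  assumes "parabolic_holder \<gamma> T u"
  shows "continuous_on (ET T) (\<lambda>(x, t). u x t)" and "bounded ((\<lambda>(x, t). u x t) ` ET T)"
proof -
  have "2 * 0 + 0 \<le> nat \<lfloor>\<gamma>\<rfloor>" by simp
  then show "continuous_on (ET T) (\<lambda>(x, t). u x t)" and "bounded ((\<lambda>(x, t). u x t) ` ET T)"
    using assms unfolding parabolic_holder_def by (metis Dtx_0_0)+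
qed

lemma parabolic_holder_differentiable:
  assumes "parabolic_holder \<gamma> T u" and "2 \<le> nat \<lfloor>\<gamma>\<rfloor>" and "t \<in> {0..T}"
  shows "(\<lambda>s. u x s) differentiable (at t within {0..T})"
    and "(\<lambda>z. u z t) differentiable (at x)"
    and "(\<lambda>z. pdx u z t) differentiable (at x)"
proof -
  note H = assms(1)[unfolded parabolic_holder_def, THEN conjunct2, THEN conjunct2, THEN conjunct1,
      rule_format]
  from H[of 0 0] assms(2,3) show "(\<lambda>s. u x s) differentiable (at t within {0..T})"
    and "(\<lambda>z. u z t) differentiable (at x)"
    by simp_all
  from H[of 0 1] assms(2,3) show "(\<lambda>z. pdx u z t) differentiable (at x)"
    by (simp add: Dtx_def)
qed

lemma le_supET:
  assumes "bounded ((\<lambda>(x, t). f x t) ` ET T)" and "t \<in> {0..T}"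
  shows "f x t \<le> supET T f"
proof -
  have "bdd_above ((\<lambda>z. f (fst z) (snd z)) ` ET T)"
    using bounded_imp_bdd_above[OF assms(1)] by (simp add: case_prod_beta)
  moreover have "(x, t) \<in> ET T" using assms(2) by (simp add: ET_def)
  ultimately show ?thesis
    unfolding supET_def using cSUP_upper by fastforce
qed

lemma abs_le_supET_abs:
  assumes "bounded ((\<lambda>(x, t). f x t) ` ET T)" and "t \<in> {0..T}"
  shows "\<bar>f x t\<bar> \<le> supET T (\<lambda>x t. \<bar>f x t\<bar>)"
proof (rule le_supET[OF _ assms(2)])
  show "bounded ((\<lambda>(x, t). \<bar>f x t\<bar>) ` ET T)"
    using assms(1) bounded_norm_comp[of "\<lambda>(x, t). f x t" "ET T"] by (simp add: case_prod_beta)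
qed

lemma smooth_fun_has_deriv: "smooth_fun f \<Longrightarrow> (f has_real_derivative deriv f z) (at z)"
  unfolding smooth_fun_def by (metis DERIV_deriv_iff_real_differentiable funpow_0)

lemma smooth_fun_has_second_deriv:
  "smooth_fun f \<Longrightarrow> (deriv f has_real_derivative deriv (deriv f) z) (at z)"
  unfolding smooth_fun_def
  by (metis DERIV_deriv_iff_real_differentiable funpow_0 funpow_Suc_right o_apply)

lemma smooth_fun_mono:
  assumes "smooth_fun f" "\<And>y. 0 \<le> deriv f y" "x \<le> y"
  shows "f x \<le> f y"
  using DERIV_nonneg_imp_nondecreasing[OF assms(3)] smooth_fun_has_deriv[OF assms(1)] assms(2) by blast

locale penalised_obstacle_problem =
  fixes T A B R J K L :: real
    and a b r v :: "real \<Rightarrow> real \<Rightarrow> real"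
    and g g' g'' p :: "real \<Rightarrow> real"
    and \<nu> :: "real measure"
  assumes T_pos: "0 < T"
    and v_continuous: "continuous_on (ET T) (\<lambda>(x, t). v x t)"
    and v_bounded: "bounded ((\<lambda>(x, t). v x t) ` ET T)"
    and v_differentiable_x: "\<And>x t. t \<in> {0..T} \<Longrightarrow> (\<lambda>z. v z t) differentiable (at x)"
    and v_differentiable_xx: "\<And>x t. t \<in> {0..T} \<Longrightarrow> (\<lambda>z. pdx v z t) differentiable (at x)"
    and v_differentiable_t: "\<And>x t. t \<in> {0..T} \<Longrightarrow> (\<lambda>s. v x s) differentiable (at t within {0..T})"
    and g_deriv: "\<And>z. (g has_real_derivative g' z) (at z)"
    and g'_deriv: "\<And>z. (g' has_real_derivative g'' z) (at z)"
    and g''_lower: "\<And>z. - J \<le> g'' z"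
    and g_bounds: "\<And>z. 0 \<le> g z \<and> g z \<le> K"
    and g'_bound: "\<And>z. \<bar>g' z\<bar> \<le> L"
    and a_bounds: "\<And>x t. t \<in> {0..T} \<Longrightarrow> 0 \<le> a x t \<and> a x t \<le> A"
    and b_bound: "\<And>x t. t \<in> {0..T} \<Longrightarrow> \<bar>b x t\<bar> \<le> B"
    and r_bounds: "\<And>x t. t \<in> {0..T} \<Longrightarrow> 0 \<le> r x t \<and> r x t \<le> R"
    and levy: "levy_measure \<nu>"
    and first_moment: "(\<integral>\<^sup>+ y. ennreal (\<bar>y\<bar> * indicator {y. 1 < \<bar>y\<bar>} y) \<partial>\<nu>) < \<infinity>"
    and penalty_below_zero: "\<And>y. y < 0 \<Longrightarrow> p y \<le> - (A * J + B * L + R * K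
        + J * (\<integral>y. indicator {y. \<bar>y\<bar> \<le> 1} y * y\<^sup>2 \<partial>\<nu>) + K * measure \<nu> {y. 1 < \<bar>y\<bar>})"
    and equation: "\<And>x t. t \<in> {0<..T} \<Longrightarrow>
        pdt T v x t - LD a b v x t - levy_I \<nu> v x t + r x t * v x t + p (v x t - g x) = 0"
    and initial: "\<And>x. v x 0 = g x"
begin

definition small_jump_moment :: real where
  "small_jump_moment = (\<integral>y. indicator {y. \<bar>y\<bar> \<le> 1} y * y\<^sup>2 \<partial>\<nu>)"

definition large_jump_moment :: real where
  "large_jump_moment = (\<integral>y. \<bar>y\<bar> * indicator {y. 1 < \<bar>y\<bar>} y \<partial>\<nu>)"

definition barrier_rate :: real where
  "barrier_rate = A + B + small_jump_moment + large_jump_moment + 1"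

definition perturbed :: "real \<Rightarrow> real \<Rightarrow> real \<Rightarrow> real" where
  "perturbed \<delta> x t = v x t - g x + \<delta> * (ln_cosh x + barrier_rate * t)"

lemma J_nonneg: "0 \<le> J"
  using second_deriv_lower_bound_nonpos_if_bounded[OF g_deriv g'_deriv g''_lower g_bounds] by simp

lemma K_nonneg: "0 \<le> K"
  using g_bounds[of 0] by simp

lemma barrier_rate_nonneg: "0 \<le> barrier_rate"
proof -
  have "0 \<le> A" "0 \<le> B" using a_bounds[of 0 0] b_bound[of 0 0] T_pos by auto
  moreover have "0 \<le> small_jump_moment" "0 \<le> large_jump_moment"
    unfolding small_jump_moment_def large_jump_moment_def by (auto intro: integral_nonneg_AE)
  ultimately show ?thesis by (simp add: barrier_rate_def)
qed

lemma levy_I_lower_bound_at_spatial_min: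
  assumes \<delta>: "0 \<le> \<delta>" and crit: "pdx v x0 t = g' x0 - \<delta> * tanh x0"
    and min: "\<And>z. v x0 t - g x0 + \<delta> * ln_cosh x0 \<le> v z t - g z + \<delta> * ln_cosh z"
  shows "- (J * small_jump_moment + \<delta> * small_jump_moment + K * measure \<nu> {y. 1 < \<bar>y\<bar>}
      + \<delta> * large_jump_moment) \<le> levy_I \<nu> v x0 t"
proof -
  define H where "H y = (J + \<delta>) * (indicator {y. \<bar>y\<bar> \<le> 1} y * y\<^sup>2)
      + K * indicator {y::real. 1 < \<bar>y\<bar>} y + \<delta> * (\<bar>y\<bar> * indicator {y. 1 < \<bar>y\<bar>} y)" for y
  have integrable_H: "integrable \<nu> H"
    unfolding H_def using levy_measure_integrable_small_jumps[OF levy]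
      levy_measure_integrable_large_jumps[OF levy] levy_measure_integrable_first_moment[OF levy first_moment]
    by auto
  have integral_H: "(\<integral>y. H y \<partial>\<nu>) = J * small_jump_moment + \<delta> * small_jump_moment
      + K * measure \<nu> {y. 1 < \<bar>y\<bar>} + \<delta> * large_jump_moment"
    unfolding H_def small_jump_moment_def large_jump_moment_def
    using levy_measure_integrable_small_jumps[OF levy] levy_measure_integral_large_jumps[OF levy]
      levy_measure_integrable_large_jumps[OF levy] levy_measure_integrable_first_moment[OF levy first_moment]
    by (simp add: algebra_simps)
  have "0 \<le> H y" for y
    unfolding H_def using J_nonneg K_nonneg \<delta> by (auto intro!: add_nonneg_nonneg mult_nonneg_nonneg)
  moreover have "- H y \<le> v (x0 + y) t - v x0 t - y * pdx v x0 t * indicator {y. \<bar>y\<bar> \<le> 1} y" for y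
  proof -
    have increment: "g (x0 + y) - g x0 - \<delta> * (ln_cosh (x0 + y) - ln_cosh x0) \<le> v (x0 + y) t - v x0 t"
      using min[of "x0 + y"] by (simp add: algebra_simps)
    show ?thesis
    proof (cases "\<bar>y\<bar> \<le> 1")
      case True
      have "- J / 2 * y\<^sup>2 \<le> g (x0 + y) - g x0 - y * g' x0"
        by (rule taylor_lower_bound_of_second_deriv[OF g_deriv g'_deriv g''_lower])
      moreover have "\<delta> * (ln_cosh (x0 + y) - ln_cosh x0 - y * tanh x0) \<le> \<delta> * (y\<^sup>2 / 2)"
        using ln_cosh_taylor_upper \<delta> by (rule mult_left_mono)
      moreover have "0 \<le> J * y\<^sup>2" "0 \<le> \<delta> * y\<^sup>2" using J_nonneg \<delta> by simp_all
      ultimately show ?thesis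
        using True increment by (simp add: H_def crit algebra_simps)
    next
      case False
      have "\<delta> * (ln_cosh (x0 + y) - ln_cosh x0) \<le> \<delta> * \<bar>y\<bar>"
        using ln_cosh_lipschitz[of "x0 + y" x0] \<delta> by (intro mult_left_mono) auto
      then show ?thesis
        using False increment g_bounds[of x0] g_bounds[of "x0 + y"] by (simp add: H_def)
    qed
  qed
  ultimately show ?thesis
    unfolding levy_I_def using neg_integral_le_integral[OF integrable_H] integral_H by simp
qed

lemma spatial_min_conditions:
  assumes t0: "t0 \<in> {0..T}" and min: "\<And>x. perturbed \<delta> x0 t0 \<le> perturbed \<delta> x t0"
  shows "pdx v x0 t0 = g' x0 - \<delta> * tanh x0"
    and "g'' x0 - \<delta> * (1 - tanh x0 ^ 2) \<le> pdx (pdx v) x0 t0"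
proof -
  have v_x: "((\<lambda>z. v z t0) has_real_derivative pdx v z t0) (at z)" for z
    using v_differentiable_x[OF t0] by (simp add: pdx_def DERIV_deriv_iff_real_differentiable)
  have v_xx: "((\<lambda>z. pdx v z t0) has_real_derivative pdx (pdx v) x0 t0) (at x0)"
    using v_differentiable_xx[OF t0]
    by (simp add: pdx_def[of "pdx v"] DERIV_deriv_iff_real_differentiable)
  have first: "((\<lambda>z. perturbed \<delta> z t0) has_real_derivative pdx v z t0 - g' z + \<delta> * tanh z) (at z)"
    for z unfolding perturbed_def
    by (auto intro!: derivative_eq_intros v_x g_deriv has_real_derivative_ln_cosh)
  have second: "((\<lambda>z. pdx v z t0 - g' z + \<delta> * tanh z) has_real_derivative
      pdx (pdx v) x0 t0 - g'' x0 + \<delta> * (1 - tanh x0 ^ 2)) (at x0)"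
    by (auto intro!: derivative_eq_intros v_xx g'_deriv has_real_derivative_tanh)
  note deriv_conditions_at_global_min[OF first second min]
  then show "pdx v x0 t0 = g' x0 - \<delta> * tanh x0"
    and "g'' x0 - \<delta> * (1 - tanh x0 ^ 2) \<le> pdx (pdx v) x0 t0"
    by simp_all
qed

lemma temporal_min_condition:
  assumes t0: "t0 \<in> {0<..T}" and min: "\<And>t. t \<in> {0..T} \<Longrightarrow> perturbed \<delta> x0 t0 \<le> perturbed \<delta> x0 t"
  shows "pdt T v x0 t0 \<le> - \<delta> * barrier_rate"
proof -
  have "((\<lambda>s. v x0 s) has_real_derivative pdt T v x0 t0) (at t0 within {0..T})"
    using v_differentiable_t[of t0 x0] t0
    by (simp add: pdt_def vector_derivative_works has_real_derivative_iff_has_vector_derivative)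
  then have "((\<lambda>s. perturbed \<delta> x0 s) has_real_derivative pdt T v x0 t0 + \<delta> * barrier_rate)
      (at t0 within {0..T})"
    unfolding perturbed_def by (auto intro!: derivative_eq_intros)
  then have "pdt T v x0 t0 + \<delta> * barrier_rate \<le> 0"
    using t0 min by (intro deriv_nonpos_at_min_within_interval) auto
  then show ?thesis by simp
qed

lemma above_obstacle_at_min_of_perturbed:
  assumes \<delta>: "0 < \<delta>" and t0: "t0 \<in> {0<..T}"
    and min: "\<And>x t. t \<in> {0..T} \<Longrightarrow> perturbed \<delta> x0 t0 \<le> perturbed \<delta> x t"
  shows "g x0 \<le> v x0 t0"
proof (rule ccontr)
  assume "\<not> g x0 \<le> v x0 t0"
  define I2 I1 m where "I2 = small_jump_moment" and "I1 = large_jump_moment"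
    and "m = measure \<nu> {y. 1 < \<bar>y\<bar>}"
  have t0': "t0 \<in> {0..T}" using t0 by simp
  note a = a_bounds[OF t0', of x0] and b = b_bound[OF t0', of x0] and r = r_bounds[OF t0', of x0]
  note spatial = spatial_min_conditions[OF t0' min[OF t0']]
  have tanh_sq: "0 \<le> 1 - tanh x0 ^ 2" "1 - tanh x0 ^ 2 \<le> 1"
    using abs_tanh_le_1[of x0] by (simp_all add: abs_square_le_1)
  have "- (J + \<delta>) \<le> pdx (pdx v) x0 t0"
    using spatial(2) g''_lower[of x0] \<delta> tanh_sq mult_left_le[of "1 - tanh x0 ^ 2" \<delta>] by linarith
  then have "a x0 t0 * - (J + \<delta>) \<le> a x0 t0 * pdx (pdx v) x0 t0"
    using a by (intro mult_left_mono) auto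
  moreover have "a x0 t0 * (J + \<delta>) \<le> A * (J + \<delta>)"
    using a J_nonneg \<delta> by (intro mult_right_mono) auto
  ultimately have diffusion: "- (a x0 t0 * pdx (pdx v) x0 t0) \<le> A * J + \<delta> * A"
    by (simp add: algebra_simps)
  have "\<bar>\<delta> * tanh x0\<bar> \<le> \<delta>"
    using abs_tanh_le_1[of x0] \<delta> by (simp add: abs_mult mult_left_le)
  then have "\<bar>pdx v x0 t0\<bar> \<le> L + \<delta>"
    using spatial(1) g'_bound[of x0] abs_triangle_ineq4[of "g' x0" "\<delta> * tanh x0"] by linarith
  then have "\<bar>b x0 t0 * pdx v x0 t0\<bar> \<le> B * (L + \<delta>)"
    unfolding abs_mult using b by (intro mult_mono) auto
  then have drift: "- (b x0 t0 * pdx v x0 t0) \<le> B * L + \<delta> * B"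
    by (simp add: algebra_simps)
  have "r x0 t0 * v x0 t0 \<le> r x0 t0 * g x0"
    using r \<open>\<not> g x0 \<le> v x0 t0\<close> by (intro mult_left_mono) auto
  also have "\<dots> \<le> R * K"
    using r g_bounds[of x0] by (intro mult_mono) auto
  finally have reaction: "r x0 t0 * v x0 t0 \<le> R * K" .
  have "v x0 t0 - g x0 + \<delta> * ln_cosh x0 \<le> v z t0 - g z + \<delta> * ln_cosh z" for z
    using min[OF t0', of z] by (simp add: perturbed_def algebra_simps)
  then have jumps: "- levy_I \<nu> v x0 t0 \<le> J * I2 + \<delta> * I2 + K * m + \<delta> * I1"
    using levy_I_lower_bound_at_spatial_min[of \<delta> x0 t0] \<delta> spatial(1)
    by (simp add: I1_def I2_def m_def)
  have penalty: "p (v x0 t0 - g x0) \<le> - (A * J + B * L + R * K + J * I2 + K * m)"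
    using penalty_below_zero[of "v x0 t0 - g x0"] \<open>\<not> g x0 \<le> v x0 t0\<close>
    by (simp add: I2_def m_def small_jump_moment_def)
  have "pdt T v x0 t0 \<le> - \<delta> * barrier_rate"
    by (rule temporal_min_condition[OF t0 min])
  then have time: "pdt T v x0 t0 \<le> - (\<delta> * A + \<delta> * B + \<delta> * I2 + \<delta> * I1 + \<delta>)"
    by (simp add: I1_def I2_def barrier_rate_def algebra_simps)
  show False
    using equation[OF t0, of x0] diffusion drift reaction jumps penalty time \<delta>
    unfolding LD_def by linarith
qed

theorem obstacle_le_solution:
  assumes t1: "t1 \<in> {0..T}"
  shows "g x1 \<le> v x1 t1"
proof (rule ccontr)
  assume "\<not> g x1 \<le> v x1 t1"
  obtain V where V: "\<And>x t. t \<in> {0..T} \<Longrightarrow> \<bar>v x t\<bar> \<le> V"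
    using v_bounded unfolding bounded_iff ET_def by fastforce
  define D where "D = ln_cosh x1 + barrier_rate * T + 1"
  define \<delta> where "\<delta> = (g x1 - v x1 t1) / (2 * D)"
  have D: "0 < D"
    unfolding D_def using ln_cosh_nonneg[of x1] barrier_rate_nonneg T_pos by (simp add: add_nonneg_pos)
  then have \<delta>: "0 < \<delta>" using \<open>\<not> g x1 \<le> v x1 t1\<close> by (simp add: \<delta>_def)
  have "barrier_rate * t1 \<le> barrier_rate * T"
    using barrier_rate_nonneg t1 by (intro mult_left_mono) auto
  then have "\<delta> * (ln_cosh x1 + barrier_rate * t1) \<le> \<delta> * D"
    unfolding D_def using \<delta> by (intro mult_left_mono) auto
  also have "\<dots> = (g x1 - v x1 t1) / 2"
    using D by (simp add: \<delta>_def)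
  finally have "perturbed \<delta> x1 t1 < 0"
    using \<open>\<not> g x1 \<le> v x1 t1\<close> by (simp add: perturbed_def)
  have "continuous_on (ET T) (\<lambda>(x, t). perturbed \<delta> x t)"
  proof -
    have "continuous_on UNIV g" "continuous_on UNIV ln_cosh"
      using g_deriv has_real_derivative_ln_cosh
      by (meson DERIV_isCont continuous_at_imp_continuous_on)+
    then have "continuous_on (ET T) (\<lambda>z. g (fst z))" "continuous_on (ET T) (\<lambda>z. ln_cosh (fst z))"
      by (auto intro: continuous_on_compose2[OF _ continuous_on_fst])
    moreover have "continuous_on (ET T) (\<lambda>z. v (fst z) (snd z))"
      using v_continuous by (simp add: case_prod_beta)
    ultimately show ?thesis
      unfolding perturbed_def case_prod_beta by (intro continuous_intros)
  qed
  moreover have "\<delta> * \<bar>x\<bar> - (V + K + \<delta>) \<le> perturbed \<delta> x t" if "t \<in> {0..T}" for x t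
  proof -
    have "\<delta> * (\<bar>x\<bar> - 1) \<le> \<delta> * (ln_cosh x + barrier_rate * t)"
      using abs_le_ln_cosh[of x] mult_nonneg_nonneg[OF barrier_rate_nonneg, of t] that \<delta>
      by (intro mult_left_mono) auto
    then show ?thesis
      using V[OF that, of x] g_bounds[of x] by (simp add: perturbed_def algebra_simps abs_le_iff)
  qed
  ultimately obtain x0 t0 where t0: "t0 \<in> {0..T}"
    and min: "\<And>x t. t \<in> {0..T} \<Longrightarrow> perturbed \<delta> x0 t0 \<le> perturbed \<delta> x t"
    using continuous_coercive_attains_min_on_strip[of T "perturbed \<delta>" \<delta>] \<delta> t1 by blast
  have negative: "perturbed \<delta> x0 t0 < 0"
    using min[OF t1, of x1] \<open>perturbed \<delta> x1 t1 < 0\<close> by simp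
  have "t0 \<noteq> 0"
  proof
    assume "t0 = 0"
    then show False
      using negative ln_cosh_nonneg[of x0] \<delta> by (simp add: perturbed_def initial mult_less_0_iff)
  qed
  then have "g x0 \<le> v x0 t0"
    using above_obstacle_at_min_of_perturbed[OF \<delta> _ min] t0 by simp
  moreover have "0 \<le> \<delta> * (ln_cosh x0 + barrier_rate * t0)"
    using \<delta> ln_cosh_nonneg[of x0] barrier_rate_nonneg t0 by simp
  ultimately show False
    using negative by (simp add: perturbed_def)
qed

end

lemma penalised_obstacle_problemI:
  assumes "0 < T"
    and v_H: "parabolic_holder \<gamma> T v" and \<gamma>: "2 \<le> nat \<lfloor>\<gamma>\<rfloor>"
    and "bounded ((\<lambda>(x, t). v x t) ` ET T)"
    and g_smooth: "smooth_fun g" and "\<And>x. - J \<le> deriv (deriv g) x"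
    and "\<And>x. 0 \<le> g x \<and> g x \<le> K" and "\<And>x. \<bar>deriv g x\<bar> \<le> L"
    and a_bdd: "bounded ((\<lambda>(x, t). a x t) ` ET T)" and "\<And>x t. t \<in> {0..T} \<Longrightarrow> 0 \<le> a x t"
    and b_bdd: "bounded ((\<lambda>(x, t). b x t) ` ET T)"
    and r_bdd: "bounded ((\<lambda>(x, t). r x t) ` ET T)" and "\<And>x t. t \<in> {0..T} \<Longrightarrow> 0 \<le> r x t"
    and "levy_measure \<nu>"
    and "(\<integral>\<^sup>+ y. ennreal (\<bar>y\<bar> * indicator {y. 1 < \<bar>y\<bar>} y) \<partial>\<nu>) < \<infinity>"
    and p_smooth: "smooth_fun p" and p_mono: "\<And>y. 0 \<le> deriv p y"
    and p_at0: "p 0 = - supET T a * J - supET T (\<lambda>x t. \<bar>b x t\<bar>) * L - supET T r * K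
        - J * (\<integral>y. indicator {y. \<bar>y\<bar> \<le> 1} y * y\<^sup>2 \<partial>\<nu>) - K * measure \<nu> {y. 1 < \<bar>y\<bar>}"
    and "\<And>x t. t \<in> {0<..T} \<Longrightarrow>
        pdt T v x t - LD a b v x t - levy_I \<nu> v x t + r x t * v x t + p (v x t - g x) = 0"
    and "\<And>x. v x 0 = g x"
  shows "penalised_obstacle_problem T (supET T a) (supET T (\<lambda>x t. \<bar>b x t\<bar>)) (supET T r) J K L
    a b r v g (deriv g) (deriv (deriv g)) p \<nu>"
proof
  show "p y \<le> - (supET T a * J + supET T (\<lambda>x t. \<bar>b x t\<bar>) * L + supET T r * K
      + J * (\<integral>y. indicator {y. \<bar>y\<bar> \<le> 1} y * y\<^sup>2 \<partial>\<nu>) + K * measure \<nu> {y. 1 < \<bar>y\<bar>})"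
    if "y < 0" for y
    using smooth_fun_mono[OF p_smooth p_mono, of y 0] that p_at0 by simp
qed (use assms parabolic_holder_continuous_bounded[OF v_H] parabolic_holder_differentiable[OF v_H \<gamma>]
    smooth_fun_has_deriv[OF g_smooth] smooth_fun_has_second_deriv[OF g_smooth]
    le_supET[OF a_bdd] abs_le_supET_abs[OF b_bdd] le_supET[OF r_bdd] in auto)

theorem corollary4p8:
  fixes T ell lam M \<alpha> \<beta> K L J0 :: real
    and a b r g :: "real \<Rightarrow> real \<Rightarrow> real"
    and g0 :: "real \<Rightarrow> real"
    and \<nu> :: "real measure" and \<rho> :: "real \<Rightarrow> real"
    and \<phi> :: "real \<Rightarrow> real"
    and p :: "real \<Rightarrow> real \<Rightarrow> real"
    and v :: "real \<Rightarrow> real \<Rightarrow> real \<Rightarrow> real"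
  assumes T: "0 < T"
    and l: "1 < ell"
    and a_H: "parabolic_holder ell T a" and b_H: "parabolic_holder ell T b" and r_H: "parabolic_holder ell T r"
    and r_nonneg: "\<And>x t. t \<in> {0..T} \<Longrightarrow> 0 \<le> r x t"
    and lam: "0 < lam" and a_ell: "\<And>x t. t \<in> {0..T} \<Longrightarrow> lam \<le> a x t"
    and levy: "levy_measure \<nu>"
    and nu_density: "\<nu> = density lborel (\<lambda>y. ennreal (\<rho> y))"
    and rho_meas: "\<rho> \<in> borel_measurable borel" and rho_nonneg: "\<And>y. 0 \<le> \<rho> y"
    and nu_first_moment: "(\<integral>\<^sup>+ y. ennreal (\<bar>y\<bar> * indicator {y. 1 < \<bar>y\<bar>} y) \<partial>\<nu>) < \<infinity>"
    and M: "0 < M" and alpha: "1 \<le> \<alpha>" "\<alpha> < 2"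
    and rho_bound: "\<And>y. y \<noteq> 0 \<Longrightarrow> \<bar>y\<bar> \<le> 1 \<Longrightarrow> \<rho> y \<le> M / \<bar>y\<bar> powr (1 + \<alpha>)"
    and beta: "\<alpha> < \<beta>" "\<beta> < 2"
    and g0_bounds: "\<And>x. 0 \<le> g0 x \<and> g0 x \<le> K"
    and g0_lip: "lipschitz_on L UNIV g0"
    and g0_d2: "dist_d2_ge g0 (- J0)"
    and mollifier: "smooth_fun \<phi>" "\<And>y. 0 \<le> \<phi> y" "\<And>y. 1 \<le> \<bar>y\<bar> \<Longrightarrow> \<phi> y = 0"
        "(\<integral>y. \<phi> y \<partial>lborel) = 1"
    and g_moll: "\<And>\<epsilon> x. \<epsilon> \<in> {0<..<1} \<Longrightarrow>
        g \<epsilon> x = (\<integral>y. g0 (x - y) * (\<phi> (y / \<epsilon>) / \<epsilon>) \<partial>lborel)"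
    and g_smooth: "\<And>\<epsilon>. \<epsilon> \<in> {0<..<1} \<Longrightarrow> smooth_fun (g \<epsilon>)"
    and g_d2: "\<And>\<epsilon> x. \<epsilon> \<in> {0<..<1} \<Longrightarrow> - J0 \<le> deriv (deriv (g \<epsilon>)) x"
    and g_bounds: "\<And>\<epsilon> x. \<epsilon> \<in> {0<..<1} \<Longrightarrow> 0 \<le> g \<epsilon> x \<and> g \<epsilon> x \<le> K"
    and g_lip: "\<And>\<epsilon> x. \<epsilon> \<in> {0<..<1} \<Longrightarrow> \<bar>deriv (g \<epsilon>) x\<bar> \<le> L"
    and p_smooth: "\<And>\<epsilon>. \<epsilon> \<in> {0<..<1} \<Longrightarrow> smooth_fun (p \<epsilon>)"
    and p_nonpos: "\<And>\<epsilon> y. \<epsilon> \<in> {0<..<1} \<Longrightarrow> p \<epsilon> y \<le> 0"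
    and p_zero: "\<And>\<epsilon> y. \<epsilon> \<in> {0<..<1} \<Longrightarrow> \<epsilon> \<le> y \<Longrightarrow> p \<epsilon> y = 0"
    and p_at0: "\<And>\<epsilon>. \<epsilon> \<in> {0<..<1} \<Longrightarrow> p \<epsilon> 0 =
        - supET T a * J0 - supET T (\<lambda>x t. \<bar>b x t\<bar>) * L - supET T r * K
        - J0 * (\<integral>y. indicator {y. \<bar>y\<bar> \<le> 1} y * y\<^sup>2 \<partial>\<nu>)
        - K * measure \<nu> {y. 1 < \<bar>y\<bar>}"
    and p_mono: "\<And>\<epsilon> y. \<epsilon> \<in> {0<..<1} \<Longrightarrow> 0 \<le> deriv (p \<epsilon>) y"
    and p_concave: "\<And>\<epsilon> y. \<epsilon> \<in> {0<..<1} \<Longrightarrow> deriv (deriv (p \<epsilon>)) y \<le> 0"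
    and p_lim_pos: "\<And>y. 0 < y \<Longrightarrow> ((\<lambda>\<epsilon>. p \<epsilon> y) \<longlongrightarrow> 0) (at_right 0)"
    and p_lim_neg: "\<And>y. y < 0 \<Longrightarrow> filterlim (\<lambda>\<epsilon>. p \<epsilon> y) at_bot (at_right 0)"
    and v_H: "\<And>\<epsilon>. \<epsilon> \<in> {0<..<1} \<Longrightarrow> parabolic_holder (2 + (\<beta> - \<alpha>) / 2) T (v \<epsilon>)"
    and v_bdd: "\<And>\<epsilon>. \<epsilon> \<in> {0<..<1} \<Longrightarrow> bounded ((\<lambda>(x, t). v \<epsilon> x t) ` ET T)"
    and v_eq: "\<And>\<epsilon> x t. \<epsilon> \<in> {0<..<1} \<Longrightarrow> t \<in> {0<..T} \<Longrightarrow>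
        pdt T (v \<epsilon>) x t - LD a b (v \<epsilon>) x t - levy_I \<nu> (v \<epsilon>) x t + r x t * v \<epsilon> x t
          + p \<epsilon> (v \<epsilon> x t - g \<epsilon> x) = 0"
    and v_init: "\<And>\<epsilon> x. \<epsilon> \<in> {0<..<1} \<Longrightarrow> v \<epsilon> x 0 = g \<epsilon> x"
  shows "\<exists>C. \<forall>\<epsilon>\<in>{0<..<1}. \<forall>x. \<forall>t\<in>{0..T}. \<bar>p \<epsilon> (v \<epsilon> x t - g \<epsilon> x)\<bar> \<le> C"
proof -
  define C where "C = supET T a * J0 + supET T (\<lambda>x t. \<bar>b x t\<bar>) * L + supET T r * K
    + J0 * (\<integral>y. indicator {y. \<bar>y\<bar> \<le> 1} y * y\<^sup>2 \<partial>\<nu>) + K * measure \<nu> {y. 1 < \<bar>y\<bar>}"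
  have "\<bar>p \<epsilon> (v \<epsilon> x t - g \<epsilon> x)\<bar> \<le> C" if \<epsilon>: "\<epsilon> \<in> {0<..<1}" and t: "t \<in> {0..T}" for \<epsilon> x t
  proof -
    have "2 \<le> \<lfloor>2 + (\<beta> - \<alpha>) / 2\<rfloor>"
      using beta by (simp add: le_floor_iff)
    then have "2 \<le> nat \<lfloor>2 + (\<beta> - \<alpha>) / 2\<rfloor>" by linarith
    then interpret penalised_obstacle_problem T "supET T a" "supET T (\<lambda>x t. \<bar>b x t\<bar>)" "supET T r"
        J0 K L a b r "v \<epsilon>" "g \<epsilon>" "deriv (g \<epsilon>)" "deriv (deriv (g \<epsilon>))" "p \<epsilon>" \<nu>
      using lam a_ell
      by (intro penalised_obstacle_problemI[OF T v_H[OF \<epsilon>]] v_bdd[OF \<epsilon>] g_smooth[OF \<epsilon>]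
          g_d2[OF \<epsilon>] g_bounds[OF \<epsilon>] g_lip[OF \<epsilon>] p_smooth[OF \<epsilon>] p_mono[OF \<epsilon>] p_at0[OF \<epsilon>]
          v_eq[OF \<epsilon>] v_init[OF \<epsilon>] r_nonneg levy nu_first_moment
          parabolic_holder_continuous_bounded(2)[OF a_H] parabolic_holder_continuous_bounded(2)[OF b_H]
          parabolic_holder_continuous_bounded(2)[OF r_H])
        (auto intro: order_trans[OF less_imp_le])
    have "p \<epsilon> 0 \<le> p \<epsilon> (v \<epsilon> x t - g \<epsilon> x)"
      using obstacle_le_solution[OF t, of x] by (intro smooth_fun_mono[OF p_smooth[OF \<epsilon>] p_mono[OF \<epsilon>]]) simp
    then show ?thesis
      using p_nonpos[OF \<epsilon>] p_at0[OF \<epsilon>] by (simp add: C_def)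
  qed
  then show ?thesis by blast
qed

end
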